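(* Let $k$ be a field, $A=kQ_A/I_A$ an indecomposable finite-dimensional monomial algebra with vertices $e_1,\dots,e_n$, and $B$ the algebra obtained from $A$ by gluing the distinct non-isolated vertices $e_1$ and $e_n$. Then there is an algebra monomorphism $Z(A)\hookrightarrow Z(B)$, and $\dim_kZ(B)=\dim_kZ(A)+\mathrm{nsp}(1,n)$.
   Context: Monomial: $A=kQ_A/I_A$, $Q_A$ a finite quiver, $I_A$ admissible, generated by a minimal set $Z_A$ of paths of length $\ge2$; $\mathcal B_A$ is the set of paths (including trivial ones) not containing an element of $Z_A$ as a subpath, a basis of $A$. Gluing: $B$ is the subalgebra of $A$ generated by $f_1=e_1+e_n$, $f_i=e_i$ ($2\le i\le n-1$) and all arrows ($B\cong kQ_B/I_B$, $Q_B$ obtained by identifying $e_1,e_n$, $I_B$ generated by $I_A$ and all newly formed length-2 paths through the new vertex). $Z(\cdot)$ denotes the center. A non-special path is a path $p\in\mathcal B_A$ either from $e_1$ to $e_n$ or from $e_n$ to $e_1$ such that $ap\in I_A$ and $pb\in I_A$ for all arrows $a,b$ of $Q_A$; $\mathrm{nsp}(1,n)$ is the number of non-special paths. *)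

theory Defs
  imports Complex_Main "HOL-Library.Function_Algebras"
begin

text \<open>A path is a pair (start vertex, list of arrows); the trivial path e_i is (i, []).
Concatenation p q = "first p, then q".\<close>

type_synonym 'a qpath = "nat \<times> 'a list"

definition is_path :: "nat \<Rightarrow> 'a set \<Rightarrow> ('a \<Rightarrow> nat) \<Rightarrow> ('a \<Rightarrow> nat) \<Rightarrow> 'a qpath \<Rightarrow> bool" where
  "is_path n Arr s t p \<longleftrightarrow> fst p \<in> {1..n} \<and> set (snd p) \<subseteq> Arr \<and>
     (snd p \<noteq> [] \<longrightarrow> s (hd (snd p)) = fst p) \<and>
     (\<forall>i. Suc i < length (snd p) \<longrightarrow> t (snd p ! i) = s (snd p ! Suc i))"

definition pend :: "('a \<Rightarrow> nat) \<Rightarrow> 'a qpath \<Rightarrow> nat" where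
  "pend t p = (if snd p = [] then fst p else t (last (snd p)))"

definition pcat :: "'a qpath \<Rightarrow> 'a qpath \<Rightarrow> 'a qpath" where
  "pcat p q = (fst p, snd p @ snd q)"

text \<open>p contains an element of Z as a subpath (i.e. p lies in the monomial ideal I_A).\<close>
definition contains_rel :: "'a list set \<Rightarrow> 'a qpath \<Rightarrow> bool" where
  "contains_rel Z p \<longleftrightarrow> (\<exists>z\<in>Z. \<exists>u v. snd p = u @ z @ v)"

definition basis_paths :: "nat \<Rightarrow> 'a set \<Rightarrow> ('a \<Rightarrow> nat) \<Rightarrow> ('a \<Rightarrow> nat) \<Rightarrow> 'a list set \<Rightarrow> 'a qpath set" where
  "basis_paths n Arr s t Z = {p. is_path n Arr s t p \<and> \<not> contains_rel Z p}"

definition monomial_relations :: "nat \<Rightarrow> 'a set \<Rightarrow> ('a \<Rightarrow> nat) \<Rightarrow> ('a \<Rightarrow> nat) \<Rightarrow> 'a list set \<Rightarrow> bool" where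
  "monomial_relations n Arr s t Z \<longleftrightarrow> finite Z \<and>
     (\<forall>z\<in>Z. 2 \<le> length z \<and> is_path n Arr s t (s (hd z), z)) \<and>
     (\<forall>z\<in>Z. \<forall>z'\<in>Z. (\<exists>u v. z = u @ z' @ v) \<longrightarrow> z' = z)"

text \<open>The algebra A: elements are k-linear combinations of basis paths, i.e. functions
vanishing outside B_A; multiplication extends concatenation (product is 0 if the paths
are not composable or the concatenation contains a relation).\<close>
definition alg_carrier :: "'a qpath set \<Rightarrow> ('a qpath \<Rightarrow> 'k::field) set" where
  "alg_carrier BA = {x. \<forall>p. p \<notin> BA \<longrightarrow> x p = 0}"

definition alg_mult :: "('a \<Rightarrow> nat) \<Rightarrow> 'a qpath set \<Rightarrow> ('a qpath \<Rightarrow> 'k::field) \<Rightarrow> ('a qpath \<Rightarrow> 'k) \<Rightarrow> ('a qpath \<Rightarrow> 'k)" where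
  "alg_mult t BA x y = (\<lambda>r. if r \<in> BA then
      (\<Sum>(p,q)\<in>{(p,q). p \<in> BA \<and> q \<in> BA \<and> pend t p = fst q \<and> pcat p q = r}. x p * y q)
    else 0)"

definition alg_smult :: "'k::field \<Rightarrow> ('a qpath \<Rightarrow> 'k) \<Rightarrow> ('a qpath \<Rightarrow> 'k)" where
  "alg_smult c x = (\<lambda>r. c * x r)"

definition basis_elt :: "'a qpath \<Rightarrow> ('a qpath \<Rightarrow> 'k::field)" where
  "basis_elt p = (\<lambda>r. if r = p then 1 else 0)"

definition alg_one :: "nat \<Rightarrow> ('a qpath \<Rightarrow> 'k::field)" where
  "alg_one n = (\<lambda>r. if snd r = [] \<and> fst r \<in> {1..n} then 1 else 0)"

definition alg_center :: "('a qpath \<Rightarrow> 'k) set \<Rightarrow> (('a qpath \<Rightarrow> 'k) \<Rightarrow> ('a qpath \<Rightarrow> 'k) \<Rightarrow> ('a qpath \<Rightarrow> 'k))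
     \<Rightarrow> ('a qpath \<Rightarrow> 'k) set" where
  "alg_center C m = {x \<in> C. \<forall>y\<in>C. m x y = m y x}"

definition alg_indecomposable :: "('a qpath \<Rightarrow> 'k::field) set \<Rightarrow> (('a qpath \<Rightarrow> 'k) \<Rightarrow> ('a qpath \<Rightarrow> 'k) \<Rightarrow> ('a qpath \<Rightarrow> 'k))
     \<Rightarrow> ('a qpath \<Rightarrow> 'k) \<Rightarrow> bool" where
  "alg_indecomposable C m one \<longleftrightarrow> one \<noteq> 0 \<and>
     (\<forall>x\<in>alg_center C m. m x x = x \<longrightarrow> x = 0 \<or> x = one)"

inductive_set gen_subalg :: "(('a qpath \<Rightarrow> 'k::field) \<Rightarrow> ('a qpath \<Rightarrow> 'k) \<Rightarrow> ('a qpath \<Rightarrow> 'k))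
    \<Rightarrow> ('a qpath \<Rightarrow> 'k) set \<Rightarrow> ('a qpath \<Rightarrow> 'k) set" for m G where
  gen: "g \<in> G \<Longrightarrow> g \<in> gen_subalg m G"
| zero: "0 \<in> gen_subalg m G"
| add: "x \<in> gen_subalg m G \<Longrightarrow> y \<in> gen_subalg m G \<Longrightarrow> x + y \<in> gen_subalg m G"
| smult: "x \<in> gen_subalg m G \<Longrightarrow> alg_smult c x \<in> gen_subalg m G"
| mult: "x \<in> gen_subalg m G \<Longrightarrow> y \<in> gen_subalg m G \<Longrightarrow> m x y \<in> gen_subalg m G"

definition glue_generators :: "nat \<Rightarrow> 'a set \<Rightarrow> ('a \<Rightarrow> nat) \<Rightarrow> ('a qpath \<Rightarrow> 'k::field) set" where
  "glue_generators n Arr s =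
     {basis_elt (1, []) + basis_elt (n, [])} \<union>
     {basis_elt (i, []) | i. 2 \<le> i \<and> i \<le> n - 1} \<union>
     {basis_elt (s a, [a]) | a. a \<in> Arr}"

definition nonspecial_paths :: "nat \<Rightarrow> 'a set \<Rightarrow> ('a \<Rightarrow> nat) \<Rightarrow> ('a \<Rightarrow> nat) \<Rightarrow> 'a list set \<Rightarrow> 'a qpath set" where
  "nonspecial_paths n Arr s t Z = {p \<in> basis_paths n Arr s t Z.
     ((fst p = 1 \<and> pend t p = n) \<or> (fst p = n \<and> pend t p = 1)) \<and>
     (\<forall>a\<in>Arr. t a = fst p \<longrightarrow> contains_rel Z (pcat (s a, [a]) p)) \<and>
     (\<forall>b\<in>Arr. pend t p = s b \<longrightarrow> contains_rel Z (pcat p (s b, [b])))}"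

definition nsp :: "nat \<Rightarrow> 'a set \<Rightarrow> ('a \<Rightarrow> nat) \<Rightarrow> ('a \<Rightarrow> nat) \<Rightarrow> 'a list set \<Rightarrow> nat" where
  "nsp n Arr s t Z = card (nonspecial_paths n Arr s t Z)"

definition kdim :: "('a qpath \<Rightarrow> 'k::field) set \<Rightarrow> nat" where
  "kdim S = vector_space.dim (alg_smult :: 'k \<Rightarrow> _) S"

end

theory Submission
  imports Defs
begin

text \<open>The glued algebra \<open>B\<close> is the subspace of \<open>A\<close> of the elements whose coefficients at
  \<open>e\<^sub>1\<close> and \<open>e\<^sub>n\<close> agree. A central element of \<open>A\<close> has equal coefficients at the two ends of
  every basis path, so the vertices at which its coefficient equals the one at \<open>e\<^sub>1\<close> form a
  central idempotent; by indecomposability this idempotent is \<open>1\<close>. Hence \<open>Z(A) \<subseteq> Z(B)\<close>, and the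
  inclusion is the monomorphism. Conversely, commuting with the generators of \<open>B\<close> forces a central
  element of \<open>B\<close> to vanish on every basis path with exactly one end at \<open>e\<^sub>1\<close>, except on the
  non-special paths; these are central in \<open>B\<close>, since no arrow can be attached to them and their
  ends are identified in \<open>B\<close>. What remains commutes with \<open>B\<close> and with \<open>e\<^sub>1\<close>, hence with
  \<open>A = B + k e\<^sub>1\<close>, so \<open>Z(B) = Z(A) \<oplus> span (non-special paths)\<close>.\<close>

fun walk :: "nat \<Rightarrow> 'a set \<Rightarrow> ('a \<Rightarrow> nat) \<Rightarrow> ('a \<Rightarrow> nat) \<Rightarrow> nat \<Rightarrow> 'a list \<Rightarrow> bool" where
  "walk n Arr s t i [] \<longleftrightarrow> i \<in> {1..n}"
| "walk n Arr s t i (a # as) \<longleftrightarrow> i \<in> {1..n} \<and> a \<in> Arr \<and> s a = i \<and> walk n Arr s t (t a) as"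

lemma walk_start: "walk n Arr s t i as \<Longrightarrow> i \<in> {1..n}"
  by (cases as) auto

lemma pend_Nil [simp]: "pend t (i, []) = i"
  by (simp add: pend_def)

lemma pend_Cons: "pend t (i, a # as) = pend t (t a, as)"
  by (cases as) (auto simp: pend_def)

lemma walk_append:
  "walk n Arr s t i (u @ v) \<longleftrightarrow> walk n Arr s t i u \<and> walk n Arr s t (pend t (i, u)) v"
proof (induction u arbitrary: i)
  case Nil
  then show ?case using walk_start by fastforce
next
  case (Cons a u)
  then show ?case by (auto simp: pend_Cons)
qed

lemma walk_pend: "walk n Arr s t i u \<Longrightarrow> pend t (i, u) \<in> {1..n}"
  using walk_append[of n Arr s t i u "[]"] by simp

lemma is_path_Cons_Cons:
  assumes "t a \<in> {1..n}"
  shows "is_path n Arr s t (i, a # b # as) \<longleftrightarrow>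
     i \<in> {1..n} \<and> a \<in> Arr \<and> s a = i \<and> is_path n Arr s t (t a, b # as)"
proof -
  have "(\<forall>k. Suc k < length (a # b # as) \<longrightarrow> t ((a # b # as) ! k) = s ((a # b # as) ! Suc k)) \<longleftrightarrow>
      t a = s b \<and> (\<forall>k. Suc k < length (b # as) \<longrightarrow> t ((b # as) ! k) = s ((b # as) ! Suc k))"
    using All_less_Suc2[of "length as" "\<lambda>k. t ((a # b # as) ! k) = s ((a # b # as) ! Suc k)"]
    by simp
  then show ?thesis using assms by (auto simp: is_path_def)
qed

lemma is_path_iff_walk:
  assumes "\<forall>a\<in>Arr. t a \<in> {1..n}"
  shows "is_path n Arr s t (i, as) \<longleftrightarrow> walk n Arr s t i as"
proof (induction as arbitrary: i rule: induct_list012)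
  case 1
  then show ?case by (simp add: is_path_def)
next
  case (2 a)
  then show ?case using assms by (auto simp: is_path_def)
next
  case (3 a b as)
  show ?case
  proof (cases "a \<in> Arr")
    case True
    then show ?thesis using assms "3.IH"(2) by (simp add: is_path_Cons_Cons)
  next
    case False
    then show ?thesis by (simp add: is_path_def)
  qed
qed

lemma contains_rel_infix: "\<not> contains_rel Z (i, u @ v @ w) \<Longrightarrow> \<not> contains_rel Z (j, v)"
  unfolding contains_rel_def by (metis append.assoc snd_conv)

lemma sum_fun_apply: "(sum f A) x = (\<Sum>a\<in>A. f a x)"
  by (induction A rule: infinite_finite_induct) auto

interpretation VS: vector_space "alg_smult :: 'k::field \<Rightarrow> ('a qpath \<Rightarrow> 'k) \<Rightarrow> ('a qpath \<Rightarrow> 'k)"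
  by unfold_locales (auto simp: alg_smult_def fun_eq_iff algebra_simps)

context vector_space
begin

lemma independent_Un_if_spans_meet_trivially:
  assumes "independent S" "independent T" "finite T" "span S \<inter> span T \<subseteq> {0}"
  shows "independent (S \<union> T)"
  using assms(3,2,4)
proof (induction T rule: finite_induct)
  case empty
  then show ?case using assms(1) by simp
next
  case (insert v T)
  have indep_T: "independent T" and v_notin: "v \<notin> span T"
    using insert.prems(1) insert.hyps(2) by (auto simp: independent_insert)
  have T_sub: "span T \<subseteq> span (insert v T)"
    by (rule span_mono) blast
  have IH: "independent (S \<union> T)"
    using insert.IH[OF indep_T] insert.prems(2) T_sub by blast
  have "v \<notin> span (S \<union> T)"
  proof
    assume "v \<in> span (S \<union> T)"
    then obtain x y where v: "v = x + y" and x: "x \<in> span S" and y: "y \<in> span T"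
      by (auto simp: span_Un)
    have "x = v - y" using v by simp
    then have "x \<in> span (insert v T)"
      using span_diff[OF span_base[of v "insert v T"]] y T_sub by blast
    then have "x = 0" using x insert.prems(2) by blast
    then show False using v y v_notin by simp
  qed
  then show ?case using IH independent_insertI[of v "S \<union> T"] by simp
qed

lemma dim_sums_independent:
  assumes U: "subspace U" "U \<subseteq> span F" "finite F"
    and E: "independent E" "finite E"
    and meet: "U \<inter> span E \<subseteq> {0}"
  shows "dim {x + y | x y. x \<in> U \<and> y \<in> span E} = dim U + card E"
proof -
  obtain C where C: "C \<subseteq> U" "independent C" "U \<subseteq> span C" "card C = dim U"
    using basis_exists by blast
  have span_C: "span C = U"
    using span_minimal[OF C(1) U(1)] C(3) by blast
  have "finite C"
    using independent_span_bound[OF U(3) C(2)] C(1) U(2) by blast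
  have "C \<inter> E = {}"
  proof -
    have "C \<inter> E \<subseteq> {0}" using C(1) span_base[of _ E] meet by blast
    then show ?thesis using E(1) dependent_zero by blast
  qed
  have "independent (C \<union> E)"
    using independent_Un_if_spans_meet_trivially[OF C(2) E] span_C meet by simp
  then have "dim (span (C \<union> E)) = card C + card E"
    using card_Un_disjoint[OF \<open>finite C\<close> E(2) \<open>C \<inter> E = {}\<close>]
    by (simp add: dim_eq_card_independent)
  then show ?thesis using C(4) span_C by (simp add: span_Un)
qed

end

lemma inj_basis_elt: "inj (basis_elt :: 'a qpath \<Rightarrow> 'a qpath \<Rightarrow> 'k::field)"
  by (rule injI) (metis basis_elt_def zero_neq_one)

lemma sum_basis_elts_apply:
  assumes "finite P"
  shows "(\<Sum>p\<in>P. alg_smult (c p) (basis_elt p)) r = (if r \<in> P then c r else (0::'k::field))"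
proof -
  have "(\<Sum>p\<in>P. alg_smult (c p) (basis_elt p)) r = (\<Sum>p\<in>P. if p = r then c r else 0)"
    unfolding sum_fun_apply alg_smult_def basis_elt_def by (rule sum.cong) auto
  then show ?thesis using assms by (simp add: sum.delta')
qed

lemma expansion_in_basis_elts:
  assumes "finite P" "\<forall>r. r \<notin> P \<longrightarrow> x r = 0"
  shows "x = (\<Sum>p\<in>P. alg_smult (x p) (basis_elt p) :: 'a qpath \<Rightarrow> 'k::field)"
  using assms by (auto simp: fun_eq_iff sum_basis_elts_apply)

lemma span_basis_elts:
  assumes "finite P"
  shows "VS.span (basis_elt ` P) = {x :: 'a qpath \<Rightarrow> 'k::field. \<forall>r. r \<notin> P \<longrightarrow> x r = 0}"
proof
  show "VS.span (basis_elt ` P) \<subseteq> {x :: 'a qpath \<Rightarrow> 'k. \<forall>r. r \<notin> P \<longrightarrow> x r = 0}"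
    by (rule VS.span_minimal) (auto simp: VS.subspace_def alg_smult_def basis_elt_def)
  show "{x :: 'a qpath \<Rightarrow> 'k. \<forall>r. r \<notin> P \<longrightarrow> x r = 0} \<subseteq> VS.span (basis_elt ` P)"
  proof
    fix x :: "'a qpath \<Rightarrow> 'k"
    assume "x \<in> {x. \<forall>r. r \<notin> P \<longrightarrow> x r = 0}"
    then have "x = (\<Sum>p\<in>P. alg_smult (x p) (basis_elt p))"
      using expansion_in_basis_elts[OF assms] by blast
    also have "\<dots> \<in> VS.span (basis_elt ` P)"
      by (intro VS.span_sum VS.span_scale VS.span_base) auto
    finally show "x \<in> VS.span (basis_elt ` P)" .
  qed
qed

lemma independent_basis_elts:
  assumes "finite P"
  shows "VS.independent (basis_elt ` P :: ('a qpath \<Rightarrow> 'k::field) set)"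
proof (rule VS.independent_if_scalars_zero)
  show "finite (basis_elt ` P :: ('a qpath \<Rightarrow> 'k) set)" using assms by blast
  fix c :: "('a qpath \<Rightarrow> 'k) \<Rightarrow> 'k" and v :: "'a qpath \<Rightarrow> 'k"
  assume zero: "(\<Sum>v\<in>basis_elt ` P. alg_smult (c v) v) = 0" and v: "v \<in> basis_elt ` P"
  then obtain p where p: "p \<in> P" "v = basis_elt p" by blast
  have "(\<Sum>v\<in>basis_elt ` P. alg_smult (c v) v) = (\<Sum>q\<in>P. alg_smult (c (basis_elt q)) (basis_elt q))"
    using sum.reindex[OF inj_on_subset[OF inj_basis_elt subset_UNIV]] by (simp add: comp_def)
  then have "(\<Sum>q\<in>P. alg_smult (c (basis_elt q)) (basis_elt q)) p = 0"
    using zero by simp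
  then show "c v = 0" using p assms by (simp add: sum_basis_elts_apply)
qed

lemma alg_mult_add_left: "alg_mult t BA (x + y) z = alg_mult t BA x z + alg_mult t BA y z"
  by (auto simp: alg_mult_def fun_eq_iff distrib_right sum.distrib split_def)

lemma alg_mult_add_right: "alg_mult t BA z (x + y) = alg_mult t BA z x + alg_mult t BA z y"
  by (auto simp: alg_mult_def fun_eq_iff distrib_left sum.distrib split_def)

lemma alg_mult_diff_left: "alg_mult t BA (x - y) z = alg_mult t BA x z - alg_mult t BA y z"
  by (auto simp: alg_mult_def fun_eq_iff left_diff_distrib sum_subtractf split_def)

lemma alg_mult_diff_right: "alg_mult t BA z (x - y) = alg_mult t BA z x - alg_mult t BA z y"
  by (auto simp: alg_mult_def fun_eq_iff right_diff_distrib sum_subtractf split_def)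

lemma alg_mult_smult_left: "alg_mult t BA (alg_smult c x) z = alg_smult c (alg_mult t BA x z)"
  by (auto simp: alg_mult_def alg_smult_def fun_eq_iff sum_distrib_left split_def mult.assoc)

lemma alg_mult_smult_right: "alg_mult t BA z (alg_smult c x) = alg_smult c (alg_mult t BA z x)"
  by (auto simp: alg_mult_def alg_smult_def fun_eq_iff sum_distrib_left split_def mult.left_commute)

lemma alg_mult_zero_left: "alg_mult t BA 0 z = 0"
  by (auto simp: alg_mult_def fun_eq_iff)

lemma alg_mult_zero_right: "alg_mult t BA z 0 = 0"
  by (auto simp: alg_mult_def fun_eq_iff)

lemma alg_mult_outside: "w \<notin> BA \<Longrightarrow> alg_mult t BA x y w = 0"
  by (simp add: alg_mult_def)

lemma alg_mult_eq_0_at: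
  assumes "\<And>p q. p \<in> BA \<Longrightarrow> q \<in> BA \<Longrightarrow> pend t p = fst q \<Longrightarrow> pcat p q = w \<Longrightarrow> x p * y q = 0"
  shows "alg_mult t BA x y w = 0"
  unfolding alg_mult_def using assms by (auto intro!: sum.neutral)

lemma alg_mult_single_term:
  assumes fin: "finite BA" and w: "w \<in> BA" and p0: "p0 \<in> BA" and q0: "q0 \<in> BA"
    and factor: "pend t p0 = fst q0" "pcat p0 q0 = w"
    and unique: "\<And>p q. p \<in> BA \<Longrightarrow> q \<in> BA \<Longrightarrow> pend t p = fst q \<Longrightarrow> pcat p q = w \<Longrightarrow>
      x p * y q \<noteq> 0 \<Longrightarrow> p = p0 \<and> q = q0"
  shows "alg_mult t BA x y w = x p0 * y q0"
proof -
  let ?S = "{(p, q). p \<in> BA \<and> q \<in> BA \<and> pend t p = fst q \<and> pcat p q = w}"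
  have "finite ?S" by (rule finite_subset[of _ "BA \<times> BA"]) (use fin in auto)
  have "alg_mult t BA x y w = (\<Sum>(p, q)\<in>?S. x p * y q)"
    using w by (simp add: alg_mult_def)
  also have "\<dots> = (\<Sum>z\<in>?S. if z = (p0, q0) then x p0 * y q0 else 0)"
  proof (rule sum.cong[OF refl])
    fix z assume "z \<in> ?S"
    then obtain p q where "z = (p, q)" "p \<in> BA" "q \<in> BA" "pend t p = fst q" "pcat p q = w"
      by blast
    moreover have "x p * y q = 0" if "(p, q) \<noteq> (p0, q0)"
      using unique[of p q] that calculation(2-5) by blast
    ultimately show "(case z of (p, q) \<Rightarrow> x p * y q) = (if z = (p0, q0) then x p0 * y q0 else 0)"
      by auto
  qed
  also have "\<dots> = x p0 * y q0"
    using \<open>finite ?S\<close> p0 q0 factor by (simp add: sum.delta')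
  finally show ?thesis .
qed

lemma center_subspace:
  assumes "VS.subspace C"
  shows "VS.subspace (alg_center C (alg_mult t BA))"
  using assms unfolding VS.subspace_def alg_center_def
  by (auto simp: alg_mult_add_left alg_mult_add_right alg_mult_smult_left alg_mult_smult_right
      alg_mult_zero_left alg_mult_zero_right)

lemma subspace_alg_carrier: "VS.subspace (alg_carrier BA)"
  by (auto simp: VS.subspace_def alg_carrier_def alg_smult_def)

lemma gen_subalg_sum:
  "finite F \<Longrightarrow> (\<forall>p\<in>F. g p \<in> gen_subalg m G) \<Longrightarrow> sum g F \<in> gen_subalg m G"
  by (induction F rule: finite_induct) (auto intro: gen_subalg.intros)

locale monomial_algebra =
  fixes n :: nat and Arr :: "'a set" and s t :: "'a \<Rightarrow> nat" and Z :: "'a list set"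
  assumes two_le_n: "2 \<le> n"
    and arrows_in_range: "\<forall>a\<in>Arr. s a \<in> {1..n} \<and> t a \<in> {1..n}"
    and relations_long: "\<forall>z\<in>Z. 2 \<le> length z"
    and finite_basis: "finite (basis_paths n Arr s t Z)"
begin

abbreviation "BA \<equiv> basis_paths n Arr s t Z"

lemma basis_path_iff: "(i, u) \<in> BA \<longleftrightarrow> walk n Arr s t i u \<and> \<not> contains_rel Z (i, u)"
  using arrows_in_range by (simp add: basis_paths_def is_path_iff_walk)

lemma vertex_in_basis: "i \<in> {1..n} \<Longrightarrow> (i, []) \<in> BA"
  using relations_long by (fastforce simp: basis_path_iff contains_rel_def)

lemma arrow_in_basis: "a \<in> Arr \<Longrightarrow> (s a, [a]) \<in> BA"
  using arrows_in_range relations_long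
  by (fastforce simp: basis_path_iff contains_rel_def Cons_eq_append_conv)

lemma basis_path_fst: "p \<in> BA \<Longrightarrow> fst p \<in> {1..n}"
  using walk_start[of n Arr s t "fst p" "snd p"] basis_path_iff[of "fst p" "snd p"] by simp

lemma basis_path_pend: "p \<in> BA \<Longrightarrow> pend t p \<in> {1..n}"
  using walk_pend basis_path_iff by (metis prod.collapse)

lemma basis_path_split: "(i, u @ v) \<in> BA \<Longrightarrow> (i, u) \<in> BA \<and> (pend t (i, u), v) \<in> BA"
  using contains_rel_infix[of Z i "[]" u v] contains_rel_infix[of Z i u v "[]"]
  by (auto simp: basis_path_iff walk_append)

lemma basis_path_arrows: "p \<in> BA \<Longrightarrow> set (snd p) \<subseteq> Arr"
  by (auto simp: basis_paths_def is_path_def)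

lemma basis_path_hd: "p \<in> BA \<Longrightarrow> snd p \<noteq> [] \<Longrightarrow> s (hd (snd p)) = fst p"
  by (auto simp: basis_paths_def is_path_def)

lemma basis_elt_in_carrier: "p \<in> BA \<Longrightarrow> (basis_elt p :: 'a qpath \<Rightarrow> 'k::field) \<in> alg_carrier BA"
  by (auto simp: alg_carrier_def basis_elt_def)

lemma alg_carrier_eq_span: "(alg_carrier BA :: ('a qpath \<Rightarrow> 'k::field) set) = VS.span (basis_elt ` BA)"
  by (simp add: span_basis_elts[OF finite_basis] alg_carrier_def)

lemma mult_at_vertex:
  assumes "i \<in> {1..n}"
  shows "alg_mult t BA x y (i, []) = x (i, []) * y (i, [])"
  by (rule alg_mult_single_term[OF finite_basis])
    (use vertex_in_basis[OF assms] in \<open>auto simp: pcat_def pend_def\<close>)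

lemma mult_basis_elt_left_self:
  assumes r: "r \<in> BA"
  shows "alg_mult t BA (basis_elt r) x r = x (pend t r, [])"
proof -
  have "alg_mult t BA (basis_elt r) x r = basis_elt r r * x (pend t r, [])"
  proof (rule alg_mult_single_term[OF finite_basis r r])
    show "(pend t r, []) \<in> BA" using basis_path_pend[OF r] vertex_in_basis by blast
    show "pend t r = fst (pend t r, [])" "pcat r (pend t r, []) = r" by (simp_all add: pcat_def)
    fix p q assume "pend t p = fst q" "pcat p q = r" "basis_elt r p * x q \<noteq> 0"
    then show "p = r \<and> q = (pend t r, [])"
      by (cases p; cases q) (auto simp: pcat_def basis_elt_def split: if_splits)
  qed
  then show ?thesis by (simp add: basis_elt_def)
qed

lemma mult_basis_elt_right_self:
  assumes r: "r \<in> BA"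
  shows "alg_mult t BA x (basis_elt r) r = x (fst r, [])"
proof -
  have "alg_mult t BA x (basis_elt r) r = x (fst r, []) * basis_elt r r"
  proof (rule alg_mult_single_term[OF finite_basis r _ r])
    show "(fst r, []) \<in> BA" using basis_path_fst[OF r] vertex_in_basis by blast
    show "pend t (fst r, []) = fst r" "pcat (fst r, []) r = r" by (simp_all add: pcat_def)
    fix p q assume "pend t p = fst q" "pcat p q = r" "x p * basis_elt r q \<noteq> 0"
    then show "p = (fst r, []) \<and> q = r"
      by (cases p; cases q) (auto simp: pcat_def basis_elt_def split: if_splits)
  qed
  then show ?thesis by (simp add: basis_elt_def)
qed

lemma basis_elt_mult_basis_elt:
  assumes "p \<in> BA" "q \<in> BA" "pend t p = fst q" "pcat p q \<in> BA"
  shows "alg_mult t BA (basis_elt p) (basis_elt q) = (basis_elt (pcat p q) :: 'a qpath \<Rightarrow> 'k::field)"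
proof
  fix w
  show "alg_mult t BA (basis_elt p) (basis_elt q) w = (basis_elt (pcat p q) :: 'a qpath \<Rightarrow> 'k) w"
  proof (cases "w = pcat p q")
    case True
    have "alg_mult t BA (basis_elt p) (basis_elt q) w = (basis_elt p p :: 'k) * basis_elt q q"
      by (rule alg_mult_single_term[OF finite_basis _ assms(1-3)])
        (use True assms(4) in \<open>auto simp: basis_elt_def split: if_splits\<close>)
    then show ?thesis using True by (simp add: basis_elt_def)
  next
    case False
    then show ?thesis by (auto intro!: alg_mult_eq_0_at simp: basis_elt_def)
  qed
qed

definition diag :: "(nat \<Rightarrow> 'k::field) \<Rightarrow> 'a qpath \<Rightarrow> 'k" where
  "diag f = (\<lambda>r. if snd r = [] \<and> fst r \<in> {1..n} then f (fst r) else 0)"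

lemma diag_in_carrier: "diag f \<in> alg_carrier BA"
  using vertex_in_basis by (auto simp: alg_carrier_def diag_def)

lemma vertex_eq_diag: "i \<in> {1..n} \<Longrightarrow> basis_elt (i, []) = diag (\<lambda>j. if j = i then 1 else 0)"
  by (auto simp: basis_elt_def diag_def fun_eq_iff)

lemma glued_vertex_eq_diag:
  "basis_elt (1, []) + basis_elt (n, []) = diag (\<lambda>j. if j = 1 \<or> j = n then 1 else 0)"
  using two_le_n by (auto simp: basis_elt_def diag_def fun_eq_iff)

lemma mult_diag_left:
  assumes w: "w \<in> BA"
  shows "alg_mult t BA (diag f) y w = f (fst w) * y w"
proof -
  have "alg_mult t BA (diag f) y w = diag f (fst w, []) * y w"
  proof (rule alg_mult_single_term[OF finite_basis w _ w])
    show "(fst w, []) \<in> BA" using basis_path_fst[OF w] vertex_in_basis by blast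
    show "pend t (fst w, []) = fst w" "pcat (fst w, []) w = w" by (simp_all add: pcat_def)
    fix p q assume "pend t p = fst q" "pcat p q = w" "diag f p * y q \<noteq> 0"
    then show "p = (fst w, []) \<and> q = w"
      by (cases p; cases q) (auto simp: pcat_def diag_def split: if_splits)
  qed
  then show ?thesis using basis_path_fst[OF w] by (simp add: diag_def)
qed

lemma mult_diag_right:
  assumes w: "w \<in> BA"
  shows "alg_mult t BA y (diag f) w = y w * f (pend t w)"
proof -
  have "alg_mult t BA y (diag f) w = y w * diag f (pend t w, [])"
  proof (rule alg_mult_single_term[OF finite_basis w w])
    show "(pend t w, []) \<in> BA" using basis_path_pend[OF w] vertex_in_basis by blast
    show "pend t w = fst (pend t w, [])" "pcat w (pend t w, []) = w" by (simp_all add: pcat_def)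
    fix p q assume "pend t p = fst q" "pcat p q = w" "y p * diag f q \<noteq> 0"
    then show "p = w \<and> q = (pend t w, [])"
      by (cases p; cases q) (auto simp: pcat_def diag_def split: if_splits)
  qed
  then show ?thesis using basis_path_pend[OF w] by (simp add: diag_def)
qed

lemma diag_mult_diag: "alg_mult t BA (diag f) (diag g) = diag (\<lambda>i. f i * g i)"
proof
  fix w
  show "alg_mult t BA (diag f) (diag g) w = diag (\<lambda>i. f i * g i) w"
  proof (cases "w \<in> BA")
    case True
    then show ?thesis by (simp add: mult_diag_left) (simp add: diag_def)
  next
    case False
    then have "diag (\<lambda>i. f i * g i) w = 0"
      using diag_in_carrier unfolding alg_carrier_def by blast
    then show ?thesis using False by (simp add: alg_mult_outside)
  qed
qed

lemma commute_diag_iff: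
  "alg_mult t BA x (diag f) = alg_mult t BA (diag f) x \<longleftrightarrow>
     (\<forall>w\<in>BA. x w * f (pend t w) = f (fst w) * x w)"
proof -
  have "alg_mult t BA x (diag f) w = alg_mult t BA (diag f) x w \<longleftrightarrow>
      (w \<in> BA \<longrightarrow> x w * f (pend t w) = f (fst w) * x w)" for w
    by (cases "w \<in> BA") (simp_all add: mult_diag_left mult_diag_right alg_mult_outside)
  then show ?thesis by (simp only: fun_eq_iff Ball_def)
qed

lemma diag_central:
  assumes "\<forall>w\<in>BA. f (fst w) = f (pend t w)"
  shows "diag f \<in> alg_center (alg_carrier BA) (alg_mult t BA)"
proof -
  have "alg_mult t BA (diag f) y = alg_mult t BA y (diag f)" for y
    using commute_diag_iff[of y f] assms by auto
  then show ?thesis using diag_in_carrier by (simp add: alg_center_def)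
qed

lemma center_coeff_fst_eq_pend:
  assumes x: "x \<in> alg_center (alg_carrier BA) (alg_mult t BA)" and r: "r \<in> BA"
  shows "x (fst r, []) = x (pend t r, [])"
proof -
  have "alg_mult t BA x (basis_elt r) = alg_mult t BA (basis_elt r) x"
    using x basis_elt_in_carrier[OF r] by (auto simp: alg_center_def)
  then show ?thesis
    using mult_basis_elt_left_self[OF r, of x] mult_basis_elt_right_self[OF r, of x] by metis
qed

lemma center_coeff_1_eq_n:
  fixes x :: "'a qpath \<Rightarrow> 'k::field"
  assumes indec: "alg_indecomposable (alg_carrier BA :: (_ \<Rightarrow> 'k) set) (alg_mult t BA) (alg_one n)"
    and x: "x \<in> alg_center (alg_carrier BA) (alg_mult t BA)"
  shows "x (1, []) = x (n, [])"
proof -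
  define f :: "nat \<Rightarrow> 'k" where "f i = (if x (i, []) = x (1, []) then 1 else 0)" for i
  have "diag f \<in> alg_center (alg_carrier BA) (alg_mult t BA)"
    using center_coeff_fst_eq_pend[OF x] by (intro diag_central) (simp add: f_def)
  moreover have "alg_mult t BA (diag f) (diag f) = diag f"
  proof -
    have "(\<lambda>i. f i * f i) = f" by (simp add: f_def fun_eq_iff)
    then show ?thesis by (simp add: diag_mult_diag)
  qed
  moreover have "diag f \<noteq> 0"
    using two_le_n by (auto simp: diag_def f_def fun_eq_iff)
  ultimately have "diag f = alg_one n"
    using indec unfolding alg_indecomposable_def by blast
  then have "f n = 1"
    using two_le_n by (simp add: alg_one_def diag_def fun_eq_iff split: if_splits)
  then show ?thesis by (simp add: f_def split: if_splits)
qed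

lemma center_vanishes_mixed:
  assumes x: "x \<in> alg_center (alg_carrier BA) (alg_mult t BA)" and w: "w \<in> BA"
    and mixed: "(fst w = 1) \<noteq> (pend t w = 1)"
  shows "x w = 0"
proof -
  have "basis_elt (1, []) \<in> alg_carrier BA"
    using two_le_n by (simp add: basis_elt_in_carrier vertex_in_basis)
  with x have "alg_mult t BA x (basis_elt (1, [])) = alg_mult t BA (basis_elt (1, [])) x"
    by (auto simp: alg_center_def)
  then show ?thesis
    using w mixed two_le_n by (auto simp: vertex_eq_diag commute_diag_iff)
qed

definition glued :: "('a qpath \<Rightarrow> 'k::field) set" where
  "glued = {y \<in> alg_carrier BA. y (1, []) = y (n, [])}"

lemma subspace_glued: "VS.subspace glued"
  by (auto simp: VS.subspace_def glued_def alg_carrier_def alg_smult_def)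

lemma glue_generators_subset_glued: "glue_generators n Arr s \<subseteq> glued"
  using vertex_in_basis arrow_in_basis two_le_n
  by (auto simp: glue_generators_def glued_def alg_carrier_def basis_elt_def)

lemma gen_subalg_subset_glued: "gen_subalg (alg_mult t BA) (glue_generators n Arr s) \<subseteq> glued"
proof
  fix x assume "x \<in> gen_subalg (alg_mult t BA) (glue_generators n Arr s)"
  then show "x \<in> glued"
  proof (induction rule: gen_subalg.induct)
    case (gen g)
    then show ?case using glue_generators_subset_glued by blast
  next
    case (mult x y)
    then show ?case
      using mult_at_vertex[of 1 x y] mult_at_vertex[of n x y] two_le_n
      by (simp add: glued_def alg_carrier_def alg_mult_outside)
  next
    case zero
    show ?case using VS.subspace_0[OF subspace_glued] .
  next
    case (add x y)
    then show ?case using VS.subspace_add[OF subspace_glued] by blast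
  next
    case (smult x c)
    then show ?case using VS.subspace_scale[OF subspace_glued] by blast
  qed
qed

lemma path_basis_elt_in_gen_subalg:
  "(i, as) \<in> BA \<Longrightarrow> as \<noteq> [] \<Longrightarrow>
    (basis_elt (i, as) :: 'a qpath \<Rightarrow> 'k::field) \<in> gen_subalg (alg_mult t BA) (glue_generators n Arr s)"
proof (induction as arbitrary: i)
  case Nil
  then show ?case by simp
next
  case (Cons a as)
  have a: "a \<in> Arr" "s a = i" using Cons.prems(1) by (auto simp: basis_path_iff)
  then have arrow:
    "(basis_elt (i, [a]) :: 'a qpath \<Rightarrow> 'k) \<in> gen_subalg (alg_mult t BA) (glue_generators n Arr s)"
    by (auto simp: glue_generators_def intro: gen_subalg.gen)
  show ?case
  proof (cases "as = []")
    case True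
    then show ?thesis using arrow by simp
  next
    case False
    have "(t a, as) \<in> BA"
      using basis_path_split[of i "[a]" as] Cons.prems(1) by (simp add: pend_def)
    then have "(basis_elt (i, a # as) :: 'a qpath \<Rightarrow> 'k) =
        alg_mult t BA (basis_elt (i, [a])) (basis_elt (t a, as))"
      using basis_elt_mult_basis_elt[of "(i, [a])" "(t a, as)", where 'k='k] arrow_in_basis[OF a(1)]
        a(2) Cons.prems(1)
      by (simp add: pend_def pcat_def)
    then show ?thesis
      using gen_subalg.mult[OF arrow Cons.IH[OF \<open>(t a, as) \<in> BA\<close> False]] by simp
  qed
qed

lemma basis_elt_in_gen_subalg:
  assumes p: "p \<in> BA" "p \<notin> {(1, []), (n, [])}"
  shows "(basis_elt p :: 'a qpath \<Rightarrow> 'k::field) \<in> gen_subalg (alg_mult t BA) (glue_generators n Arr s)"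
proof (cases "snd p = []")
  case True
  then have "2 \<le> fst p \<and> fst p \<le> n - 1" using p basis_path_fst[of p] by (cases p) auto
  then show ?thesis
    using True by (intro gen_subalg.gen) (cases p, auto simp: glue_generators_def)
next
  case False
  then show ?thesis using p path_basis_elt_in_gen_subalg[of "fst p" "snd p"] by simp
qed

lemma glued_minus_vertex_part_vanishes:
  assumes y: "y \<in> glued" and r: "r \<notin> BA - {(1, []), (n, [])}"
  shows "(y - alg_smult (y (1, [])) (basis_elt (1, []) + basis_elt (n, []))) r = 0"
proof -
  have "(1, []) \<noteq> (n, [])" using two_le_n by simp
  consider "r \<notin> BA" | "r = (1, [])" | "r = (n, [])" using r by blast
  then show ?thesis
  proof cases
    case 1
    moreover have "(1, []) \<in> BA" "(n, []) \<in> BA" using two_le_n by (simp_all add: vertex_in_basis)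
    moreover have "y r = 0" using y 1 unfolding glued_def alg_carrier_def by blast
    ultimately show ?thesis by (auto simp: alg_smult_def basis_elt_def)
  next
    case 2
    then show ?thesis using \<open>(1, []) \<noteq> (n, [])\<close> by (simp add: alg_smult_def basis_elt_def)
  next
    case 3
    moreover have "y (1, []) = y (n, [])" using y by (simp add: glued_def)
    ultimately show ?thesis using \<open>(1, []) \<noteq> (n, [])\<close> by (simp add: alg_smult_def basis_elt_def)
  qed
qed

lemma glued_subset_gen_subalg: "glued \<subseteq> gen_subalg (alg_mult t BA) (glue_generators n Arr s)"
proof
  fix y :: "'a qpath \<Rightarrow> 'k::field" assume y: "y \<in> glued"
  let ?G = "gen_subalg (alg_mult t BA) (glue_generators n Arr s) :: ('a qpath \<Rightarrow> 'k) set"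
  let ?f = "basis_elt (1, []) + basis_elt (n, []) :: 'a qpath \<Rightarrow> 'k"
  let ?z = "y - alg_smult (y (1, [])) ?f"
  let ?F = "BA - {(1, []), (n, [])}"
  have "?z = (\<Sum>p\<in>?F. alg_smult (?z p) (basis_elt p))"
    by (rule expansion_in_basis_elts) (use finite_basis glued_minus_vertex_part_vanishes[OF y] in blast)+
  also have "\<dots> \<in> ?G"
    using finite_basis basis_elt_in_gen_subalg
    by (intro gen_subalg_sum ballI gen_subalg.smult) auto
  finally have "?z \<in> ?G" .
  moreover have "alg_smult (y (1, [])) ?f \<in> ?G"
    by (intro gen_subalg.smult gen_subalg.gen) (simp add: glue_generators_def)
  ultimately have "?z + alg_smult (y (1, [])) ?f \<in> ?G"
    by (rule gen_subalg.add)
  then show "y \<in> ?G" by simp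
qed

lemma gen_subalg_eq_glued: "gen_subalg (alg_mult t BA) (glue_generators n Arr s) = glued"
  using gen_subalg_subset_glued glued_subset_gen_subalg by blast

lemma center_subset_center_glued:
  assumes "alg_indecomposable (alg_carrier BA :: (_ \<Rightarrow> 'k::field) set) (alg_mult t BA) (alg_one n)"
  shows "alg_center (alg_carrier BA :: (_ \<Rightarrow> 'k) set) (alg_mult t BA) \<subseteq> alg_center glued (alg_mult t BA)"
  using center_coeff_1_eq_n[OF assms] by (auto simp: alg_center_def glued_def)

abbreviation "NSP \<equiv> nonspecial_paths n Arr s t Z"

definition left_maximal :: "'a qpath \<Rightarrow> bool" where
  "left_maximal p \<longleftrightarrow> (\<forall>a\<in>Arr. t a = fst p \<longrightarrow> contains_rel Z (pcat (s a, [a]) p))"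

definition right_maximal :: "'a qpath \<Rightarrow> bool" where
  "right_maximal p \<longleftrightarrow> (\<forall>b\<in>Arr. pend t p = s b \<longrightarrow> contains_rel Z (pcat p (s b, [b])))"

lemma nonspecial_path_iff:
  "p \<in> NSP \<longleftrightarrow> p \<in> BA \<and> ((fst p = 1 \<and> pend t p = n) \<or> (fst p = n \<and> pend t p = 1)) \<and>
     left_maximal p \<and> right_maximal p"
  by (auto simp: nonspecial_paths_def left_maximal_def right_maximal_def)

lemma nonspecial_path_mixed: "p \<in> NSP \<Longrightarrow> (fst p = 1) \<noteq> (pend t p = 1)"
  using two_le_n by (auto simp: nonspecial_path_iff)

lemma finite_nonspecial: "finite NSP"
  using finite_basis by (rule finite_subset[rotated]) (auto simp: nonspecial_path_iff)

text \<open>A right maximal path followed by a path of positive length lies in \<open>I\<^sub>A\<close>, so only the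
  factorisation \<open>w = w e\<^bsub>t(w)\<^esub>\<close> contributes.\<close>

lemma mult_right_maximal_left:
  assumes u: "\<And>r. u r \<noteq> 0 \<Longrightarrow> right_maximal r" and w: "w \<in> BA"
  shows "alg_mult t BA u y w = u w * y (pend t w, [])"
proof (rule alg_mult_single_term[OF finite_basis w w])
  show "(pend t w, []) \<in> BA" using basis_path_pend[OF w] vertex_in_basis by blast
  show "pend t w = fst (pend t w, [])" "pcat w (pend t w, []) = w" by (simp_all add: pcat_def)
  fix p q assume pq: "p \<in> BA" "q \<in> BA" "pend t p = fst q" "pcat p q = w" "u p * y q \<noteq> 0"
  have "snd q = []"
  proof (rule ccontr)
    assume ne: "snd q \<noteq> []"
    define b where "b = hd (snd q)"
    have "b \<in> Arr" "s b = pend t p"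
      using basis_path_arrows[OF pq(2)] basis_path_hd[OF pq(2) ne] pq(3) ne
      by (auto simp: b_def)
    then have "contains_rel Z (pcat p (s b, [b]))"
      using u[of p] pq(5) by (auto simp: right_maximal_def)
    moreover have "snd w = (snd p @ [b]) @ tl (snd q)"
      using pq(4)[symmetric] ne by (simp add: b_def pcat_def)
    ultimately have "contains_rel Z w"
      unfolding contains_rel_def pcat_def by (metis append.assoc snd_conv)
    then show False using w by (simp add: basis_paths_def)
  qed
  then show "p = w \<and> q = (pend t w, [])"
    using pq(3,4) by (cases p; cases q) (auto simp: pcat_def)
qed

lemma mult_left_maximal_right:
  assumes u: "\<And>r. u r \<noteq> 0 \<Longrightarrow> left_maximal r" and w: "w \<in> BA"
  shows "alg_mult t BA y u w = y (fst w, []) * u w"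
proof (rule alg_mult_single_term[OF finite_basis w _ w])
  show "(fst w, []) \<in> BA" using basis_path_fst[OF w] vertex_in_basis by blast
  show "pend t (fst w, []) = fst w" "pcat (fst w, []) w = w" by (simp_all add: pcat_def)
  fix p q assume pq: "p \<in> BA" "q \<in> BA" "pend t p = fst q" "pcat p q = w" "y p * u q \<noteq> 0"
  have "snd p = []"
  proof (rule ccontr)
    assume ne: "snd p \<noteq> []"
    define a where "a = last (snd p)"
    have "a \<in> Arr" "t a = fst q"
      using basis_path_arrows[OF pq(1)] pq(3) ne by (auto simp: a_def pend_def)
    then have "contains_rel Z (pcat (s a, [a]) q)"
      using u[of q] pq(5) by (auto simp: left_maximal_def)
    moreover have "snd w = butlast (snd p) @ ([a] @ snd q)"
      using pq(4)[symmetric] ne by (simp add: a_def pcat_def)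
    ultimately have "contains_rel Z w"
      unfolding contains_rel_def pcat_def by (metis append.assoc snd_conv)
    then show False using w by (simp add: basis_paths_def)
  qed
  then show "p = (fst w, []) \<and> q = w"
    using pq(3,4) by (cases p; cases q) (auto simp: pcat_def)
qed

lemma nonspecial_supported_commutes_glued:
  assumes u: "\<And>r. u r \<noteq> 0 \<Longrightarrow> r \<in> NSP" and y: "y \<in> glued"
  shows "alg_mult t BA u y = alg_mult t BA y u"
proof
  fix w
  have left_max: "\<And>r. u r \<noteq> 0 \<Longrightarrow> left_maximal r"
    and right_max: "\<And>r. u r \<noteq> 0 \<Longrightarrow> right_maximal r"
    using u by (auto simp: nonspecial_path_iff)
  show "alg_mult t BA u y w = alg_mult t BA y u w"
  proof (cases "w \<in> BA")
    case True
    have "u w = 0 \<or> y (pend t w, []) = y (fst w, [])"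
      using u[of w] y by (cases "u w = 0") (auto simp: nonspecial_path_iff glued_def)
    then show ?thesis
      using mult_right_maximal_left[where u=u, OF right_max True]
        mult_left_maximal_right[where u=u, OF left_max True]
      by auto
  next
    case False
    then show ?thesis by (simp add: alg_mult_outside)
  qed
qed

lemma span_nonspecial_subset_center_glued:
  "VS.span (basis_elt ` NSP) \<subseteq> (alg_center glued (alg_mult t BA) :: ('a qpath \<Rightarrow> 'k::field) set)"
proof
  fix u :: "'a qpath \<Rightarrow> 'k" assume "u \<in> VS.span (basis_elt ` NSP)"
  then have u: "\<And>r. u r \<noteq> 0 \<Longrightarrow> r \<in> NSP"
    by (auto simp: span_basis_elts[OF finite_nonspecial])
  have "u (i, []) = 0" for i
    using u[of "(i, [])"] nonspecial_path_mixed[of "(i, [])"] by auto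
  moreover have "u \<in> alg_carrier BA"
    using u by (auto simp: alg_carrier_def nonspecial_path_iff)
  ultimately have "u \<in> glued"
    by (simp add: glued_def)
  then show "u \<in> alg_center glued (alg_mult t BA)"
    using nonspecial_supported_commutes_glued[of u, OF u] by (simp add: alg_center_def)
qed

text \<open>The arrow \<open>a\<close> lies in \<open>B\<close>: on the path \<open>a w\<close> the product \<open>a x\<close> has coefficient \<open>x w\<close>,
  whereas \<open>x a\<close> vanishes there, since \<open>a w\<close> would have to end with \<open>a\<close> and \<open>w\<close> is not a cycle.\<close>

lemma center_glued_vanishes_left_extendable:
  fixes x :: "'a qpath \<Rightarrow> 'k::field"
  assumes x: "x \<in> alg_center glued (alg_mult t BA)" and w: "w \<in> BA"
    and a: "a \<in> Arr" "t a = fst w" and not_cycle: "fst w \<noteq> pend t w"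
    and extendable: "\<not> contains_rel Z (pcat (s a, [a]) w)"
  shows "x w = 0"
proof -
  let ?arrow = "basis_elt (s a, [a]) :: 'a qpath \<Rightarrow> 'k"
  define W where "W = pcat (s a, [a]) w"
  have W: "W \<in> BA"
    using a w extendable arrows_in_range basis_path_iff[of "fst w" "snd w"]
    by (simp add: W_def pcat_def basis_path_iff)
  have "?arrow \<in> glued"
    using glue_generators_subset_glued a(1) by (auto simp: glue_generators_def)
  then have "alg_mult t BA x ?arrow W = alg_mult t BA ?arrow x W"
    using x by (auto simp: alg_center_def)
  moreover have "alg_mult t BA ?arrow x W = x w"
  proof -
    have "alg_mult t BA ?arrow x W = ?arrow (s a, [a]) * x w"
    proof (rule alg_mult_single_term[OF finite_basis W arrow_in_basis[OF a(1)] w])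
      show "pend t (s a, [a]) = fst w" "pcat (s a, [a]) w = W"
        using a(2) by (simp_all add: W_def pend_def)
      fix p q assume "p \<in> BA" "q \<in> BA" "pend t p = fst q" "pcat p q = W" "?arrow p * x q \<noteq> 0"
      then show "p = (s a, [a]) \<and> q = w"
        using a(2) by (cases q; cases w) (auto simp: W_def pcat_def pend_def basis_elt_def split: if_splits)
    qed
    then show ?thesis by (simp add: basis_elt_def)
  qed
  moreover have "alg_mult t BA x ?arrow W = 0"
  proof (rule alg_mult_eq_0_at)
    fix p q assume pq: "pcat p q = W"
    show "x p * ?arrow q = 0"
    proof (rule ccontr)
      assume "x p * ?arrow q \<noteq> 0"
      then have "snd p @ [a] = a # snd w"
        using pq by (auto simp: W_def pcat_def basis_elt_def split: if_splits)
      moreover have "snd w \<noteq> []" using not_cycle by (cases w) (auto simp: pend_def)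
      ultimately have "last (snd w) = a" by (metis last_ConsR last_snoc)
      then show False using not_cycle a(2) \<open>snd w \<noteq> []\<close> by (simp add: pend_def)
    qed
  qed
  ultimately show ?thesis by simp
qed

lemma center_glued_vanishes_right_extendable:
  fixes x :: "'a qpath \<Rightarrow> 'k::field"
  assumes x: "x \<in> alg_center glued (alg_mult t BA)" and w: "w \<in> BA"
    and b: "b \<in> Arr" "pend t w = s b" and not_cycle: "fst w \<noteq> pend t w"
    and extendable: "\<not> contains_rel Z (pcat w (s b, [b]))"
  shows "x w = 0"
proof -
  let ?arrow = "basis_elt (s b, [b]) :: 'a qpath \<Rightarrow> 'k"
  define W where "W = pcat w (s b, [b])"
  have W: "W \<in> BA"
    using b w extendable arrows_in_range basis_path_iff[of "fst w" "snd w"]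
    by (simp add: W_def pcat_def basis_path_iff walk_append)
  have "?arrow \<in> glued"
    using glue_generators_subset_glued b(1) by (auto simp: glue_generators_def)
  then have "alg_mult t BA x ?arrow W = alg_mult t BA ?arrow x W"
    using x by (auto simp: alg_center_def)
  moreover have "alg_mult t BA x ?arrow W = x w"
  proof -
    have "alg_mult t BA x ?arrow W = x w * ?arrow (s b, [b])"
    proof (rule alg_mult_single_term[OF finite_basis W w arrow_in_basis[OF b(1)]])
      show "pend t w = fst (s b, [b])" "pcat w (s b, [b]) = W"
        using b(2) by (simp_all add: W_def)
      fix p q assume "p \<in> BA" "q \<in> BA" "pend t p = fst q" "pcat p q = W" "x p * ?arrow q \<noteq> 0"
      then show "p = w \<and> q = (s b, [b])"
        by (cases p; cases w) (auto simp: W_def pcat_def basis_elt_def split: if_splits)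
    qed
    then show ?thesis by (simp add: basis_elt_def)
  qed
  moreover have "alg_mult t BA ?arrow x W = 0"
  proof (rule alg_mult_eq_0_at)
    fix p q assume pq: "pcat p q = W"
    show "?arrow p * x q = 0"
    proof (rule ccontr)
      assume "?arrow p * x q \<noteq> 0"
      then have "fst w = s b"
        using pq by (auto simp: W_def pcat_def basis_elt_def split: if_splits)
      then show False using not_cycle b(2) by simp
    qed
  qed
  ultimately show ?thesis by simp
qed

lemma center_glued_vanishes_mixed:
  fixes x :: "'a qpath \<Rightarrow> 'k::field"
  assumes x: "x \<in> alg_center glued (alg_mult t BA)" and w: "w \<in> BA" "w \<notin> NSP"
    and mixed: "(fst w = 1) \<noteq> (pend t w = 1)"
  shows "x w = 0"
proof (cases "fst w \<in> {1, n} \<and> pend t w \<in> {1, n}")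
  case True
  then have "fst w \<noteq> pend t w" using mixed by auto
  moreover have "\<not> left_maximal w \<or> \<not> right_maximal w"
    using True mixed w by (auto simp: nonspecial_path_iff)
  ultimately show ?thesis
    using center_glued_vanishes_left_extendable[OF x w(1)]
      center_glued_vanishes_right_extendable[OF x w(1)]
    by (auto simp: left_maximal_def right_maximal_def)
next
  case False
  let ?f = "basis_elt (1, []) + basis_elt (n, []) :: 'a qpath \<Rightarrow> 'k"
  have "?f \<in> glued"
    using glue_generators_subset_glued by (auto simp: glue_generators_def)
  then have "alg_mult t BA x ?f = alg_mult t BA ?f x"
    using x by (auto simp: alg_center_def)
  then have "x w * (if pend t w = 1 \<or> pend t w = n then 1 else 0) =
      (if fst w = 1 \<or> fst w = n then 1 else 0) * x w"
    using w(1) unfolding glued_vertex_eq_diag commute_diag_iff by blast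
  then show ?thesis using False mixed by (auto split: if_splits)
qed

lemma center_if_commutes_glued:
  fixes x :: "'a qpath \<Rightarrow> 'k::field"
  assumes x: "x \<in> alg_carrier BA" and commutes: "\<forall>y\<in>glued. alg_mult t BA x y = alg_mult t BA y x"
    and mixed: "\<forall>w\<in>BA. (fst w = 1) \<noteq> (pend t w = 1) \<longrightarrow> x w = 0"
  shows "x \<in> alg_center (alg_carrier BA) (alg_mult t BA)"
proof -
  let ?e = "basis_elt (1, []) :: 'a qpath \<Rightarrow> 'k"
  have commutes_e: "alg_mult t BA x ?e = alg_mult t BA ?e x"
    using mixed two_le_n by (auto simp: vertex_eq_diag commute_diag_iff)
  have "alg_mult t BA x y = alg_mult t BA y x" if y: "y \<in> alg_carrier BA" for y
  proof -
    let ?y = "y - alg_smult (y (1, []) - y (n, [])) ?e"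
    have "?y \<in> glued"
      using y two_le_n vertex_in_basis[of 1]
      by (auto simp: glued_def alg_carrier_def alg_smult_def basis_elt_def)
    then have "alg_mult t BA x ?y = alg_mult t BA ?y x"
      using commutes by blast
    then show ?thesis
      using commutes_e
      by (simp add: alg_mult_diff_left alg_mult_diff_right alg_mult_smult_left alg_mult_smult_right)
  qed
  then show ?thesis using x by (simp add: alg_center_def)
qed

lemma center_glued_eq_sums:
  assumes indec: "alg_indecomposable (alg_carrier BA :: (_ \<Rightarrow> 'k::field) set) (alg_mult t BA) (alg_one n)"
  shows "alg_center glued (alg_mult t BA) =
    {x + y | x y. x \<in> alg_center (alg_carrier BA :: (_ \<Rightarrow> 'k) set) (alg_mult t BA) \<and>
                   y \<in> VS.span (basis_elt ` NSP)}"
    (is "?ZB = ?S")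
proof
  show "?S \<subseteq> ?ZB"
  proof
    fix z assume "z \<in> ?S"
    then obtain x y where "z = x + y" "x \<in> alg_center (alg_carrier BA) (alg_mult t BA)"
      "y \<in> VS.span (basis_elt ` NSP)"
      by blast
    then show "z \<in> ?ZB"
      using center_subset_center_glued[OF indec] span_nonspecial_subset_center_glued
        VS.subspace_add[OF center_subspace[OF subspace_glued]]
      by blast
  qed
  show "?ZB \<subseteq> ?S"
  proof
    fix x assume x: "x \<in> ?ZB"
    define u where "u = (\<lambda>r. if r \<in> NSP then x r else 0)"
    have u: "u \<in> VS.span (basis_elt ` NSP)"
      by (simp add: span_basis_elts[OF finite_nonspecial] u_def)
    then have "x - u \<in> ?ZB"
      using x span_nonspecial_subset_center_glued
      by (blast intro: VS.subspace_diff center_subspace subspace_glued)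
    moreover have "glued \<subseteq> alg_carrier BA" by (auto simp: glued_def)
    ultimately have "x - u \<in> alg_center (alg_carrier BA) (alg_mult t BA)"
      using x center_glued_vanishes_mixed[OF x]
      by (intro center_if_commutes_glued) (auto simp: alg_center_def u_def)
    then show "x \<in> ?S"
      using u by force
  qed
qed

lemma center_Int_span_nonspecial:
  "alg_center (alg_carrier BA) (alg_mult t BA) \<inter> VS.span (basis_elt ` NSP) \<subseteq> {0 :: _ \<Rightarrow> 'k::field}"
proof
  fix x :: "'a qpath \<Rightarrow> 'k"
  assume x: "x \<in> alg_center (alg_carrier BA) (alg_mult t BA) \<inter> VS.span (basis_elt ` NSP)"
  have "x r = 0" for r
  proof (cases "r \<in> NSP")
    case True
    then have "r \<in> BA" by (simp add: nonspecial_path_iff)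
    then show ?thesis
      using x center_vanishes_mixed[of x r] nonspecial_path_mixed[OF True] by blast
  next
    case False
    moreover have "x \<in> {x. \<forall>r. r \<notin> NSP \<longrightarrow> x r = 0}"
      using x span_basis_elts[OF finite_nonspecial] by blast
    ultimately show ?thesis by blast
  qed
  then show "x \<in> {0}" by auto
qed

lemma dim_center_glued:
  assumes indec: "alg_indecomposable (alg_carrier BA :: (_ \<Rightarrow> 'k::field) set) (alg_mult t BA) (alg_one n)"
  shows "VS.dim (alg_center glued (alg_mult t BA) :: (_ \<Rightarrow> 'k) set) =
    VS.dim (alg_center (alg_carrier BA :: (_ \<Rightarrow> 'k) set) (alg_mult t BA)) + card NSP"
proof -
  have "alg_center (alg_carrier BA :: (_ \<Rightarrow> 'k) set) (alg_mult t BA) \<subseteq> VS.span (basis_elt ` BA)"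
    using alg_carrier_eq_span by (auto simp: alg_center_def)
  then have "VS.dim (alg_center glued (alg_mult t BA) :: (_ \<Rightarrow> 'k) set) =
      VS.dim (alg_center (alg_carrier BA :: (_ \<Rightarrow> 'k) set) (alg_mult t BA)) +
      card (basis_elt ` NSP :: (_ \<Rightarrow> 'k) set)"
    unfolding center_glued_eq_sums[OF indec]
    using finite_basis finite_nonspecial
    by (intro VS.dim_sums_independent center_subspace subspace_alg_carrier
        independent_basis_elts center_Int_span_nonspecial) auto
  then show ?thesis
    using card_image[OF inj_on_subset[OF inj_basis_elt subset_UNIV]] by simp
qed

end

theorem proposition6p3:
  fixes n :: nat and Arr :: "'a set" and s t :: "'a \<Rightarrow> nat" and Z :: "'a list set"
  defines "BA \<equiv> basis_paths n Arr s t Z"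
  defines "A \<equiv> (alg_carrier BA :: ('a qpath \<Rightarrow> 'k::field) set)"
  defines "m \<equiv> (alg_mult t BA :: ('a qpath \<Rightarrow> 'k) \<Rightarrow> _ \<Rightarrow> _)"
  defines "B \<equiv> gen_subalg m (glue_generators n Arr s)"
  assumes n2: "2 \<le> n"
    and arrows: "finite Arr" "\<forall>a\<in>Arr. s a \<in> {1..n} \<and> t a \<in> {1..n}"
    and rels: "monomial_relations n Arr s t Z"
    and findim: "finite BA"
    and indec: "alg_indecomposable A m (alg_one n)"
    and nonisol1: "\<exists>a\<in>Arr. s a = 1 \<or> t a = 1"
    and nonisoln: "\<exists>a\<in>Arr. s a = n \<or> t a = n"
  shows "(\<exists>\<phi>. (\<forall>x\<in>alg_center A m. \<phi> x \<in> alg_center B m) \<and> inj_on \<phi> (alg_center A m) \<and>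
            (\<forall>x\<in>alg_center A m. \<forall>y\<in>alg_center A m. \<phi> (x + y) = \<phi> x + \<phi> y \<and> \<phi> (m x y) = m (\<phi> x) (\<phi> y)) \<and>
            (\<forall>c. \<forall>x\<in>alg_center A m. \<phi> (alg_smult c x) = alg_smult c (\<phi> x)) \<and>
            \<phi> (alg_one n) = alg_one n)
       \<and> kdim (alg_center B m) = kdim (alg_center A m) + nsp n Arr s t Z"
proof -
  interpret monomial_algebra n Arr s t Z
    using n2 arrows(2) rels findim unfolding BA_def monomial_relations_def by unfold_locales auto
  note indec_A = indec[unfolded A_def m_def BA_def]
  have B_eq: "B = glued"
    unfolding B_def m_def BA_def by (rule gen_subalg_eq_glued)
  have "alg_center A m \<subseteq> alg_center B m"
    unfolding B_eq A_def m_def BA_def by (rule center_subset_center_glued[OF indec_A])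
  moreover have "kdim (alg_center B m) = kdim (alg_center A m) + nsp n Arr s t Z"
    unfolding kdim_def nsp_def B_eq A_def m_def BA_def by (rule dim_center_glued[OF indec_A])
  ultimately show ?thesis
    by (intro conjI exI[of _ id]) auto
qed

end
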